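(* Let $M=(S,\mathrm{Act},P)$ be an MDP and $T\subseteq S$. Let $(x,r)\in[0,1]^S\times\mathbb{N}_\infty^S$ satisfy: (1) $D^{\min}_x(r)\le r$; (2) $x\le B^{\max}(x)$; (3) for all $s\in S\setminus T$, $x(s)>0$ implies $r(s)<\infty$ (inequalities pointwise). Then $\Pr^{\max}_s(\Diamond T)\ge x(s)$ for all $s\in S$.
   Context: An MDP is a tuple $M=(S,\mathrm{Act},P)$ with $S$ finite, $\mathrm{Act}$ finite, $P\colon S\times\mathrm{Act}\times S\to[0,1]$ with $\sum_{s'}P(s,a,s')\in\{0,1\}$; $\mathrm{Act}(s)=\{a\mid\sum_{s'}P(s,a,s')=1\}$ is nonempty for all $s$; $\mathrm{Post}(s,a)=\{s'\mid P(s,a,s')>0\}$. A strategy is $\sigma\colon S\to\mathrm{Act}$ with $\sigma(s)\in\mathrm{Act}(s)$, inducing a Markov chain with transitions $P(s,\sigma(s),\cdot)$; $\Pr^\sigma_s(\Diamond T)$ is the probability of visiting $T$ from $s$ and $\Pr^{\max}_s(\Diamond T)=\max_\sigma\Pr^\sigma_s(\Diamond T)$. $B^{\max}(x)(s)=1$ for $s\in T$ and $\max_{a\in\mathrm{Act}(s)}\sum_{s'\in\mathrm{Post}(s,a)}P(s,a,s')x(s')$ for $s\notin T$. The $x$-increasing actions of $s$ are $\mathrm{Act}_x(s)=\{a\in\mathrm{Act}(s)\mid x(s)\le\sum_{s'\in\mathrm{Post}(s,a)}P(s,a,s')x(s')\}$. $\mathbb{N}_\infty=\mathbb{N}\cup\{\infty\}$,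 $1+\infty=\infty$, minimum over the empty set is $\infty$. The operator $D^{\min}_x\colon\mathbb{N}_\infty^S\to\mathbb{N}_\infty^S$ is $D^{\min}_x(r)(s)=0$ for $s\in T$ and $1+\min_{a\in\mathrm{Act}_x(s)}\min_{s'\in\mathrm{Post}(s,a)}r(s')$ for $s\notin T$. *)

theory Defs
  imports Complex_Main "HOL-Library.Extended_Nat"
begin

definition is_mdp :: "('s::finite \<Rightarrow> 'a::finite \<Rightarrow> 's \<Rightarrow> real) \<Rightarrow> bool" where
  "is_mdp P \<longleftrightarrow>
     (\<forall>s a s'. 0 \<le> P s a s' \<and> P s a s' \<le> 1) \<and>
     (\<forall>s a. (\<Sum>s'\<in>UNIV. P s a s') \<in> {0, 1}) \<and>
     (\<forall>s. \<exists>a. (\<Sum>s'\<in>UNIV. P s a s') = 1)"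

definition Act :: "('s::finite \<Rightarrow> 'a::finite \<Rightarrow> 's \<Rightarrow> real) \<Rightarrow> 's \<Rightarrow> 'a set" where
  "Act P s = {a. (\<Sum>s'\<in>UNIV. P s a s') = 1}"

definition Post :: "('s::finite \<Rightarrow> 'a::finite \<Rightarrow> 's \<Rightarrow> real) \<Rightarrow> 's \<Rightarrow> 'a \<Rightarrow> 's set" where
  "Post P s a = {s'. P s a s' > 0}"

definition is_strategy :: "('s::finite \<Rightarrow> 'a::finite \<Rightarrow> 's \<Rightarrow> real) \<Rightarrow> ('s \<Rightarrow> 'a) \<Rightarrow> bool" where
  "is_strategy P \<sigma> \<longleftrightarrow> (\<forall>s. \<sigma> s \<in> Act P s)"

fun reach_within :: "('s::finite \<Rightarrow> 'a::finite \<Rightarrow> 's \<Rightarrow> real) \<Rightarrow> ('s \<Rightarrow> 'a) \<Rightarrow> 's set \<Rightarrow> nat \<Rightarrow> 's \<Rightarrow> real" where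
  "reach_within P \<sigma> T 0 s = (if s \<in> T then 1 else 0)"
| "reach_within P \<sigma> T (Suc n) s =
     (if s \<in> T then 1 else (\<Sum>s'\<in>UNIV. P s (\<sigma> s) s' * reach_within P \<sigma> T n s'))"

definition Pr_reach :: "('s::finite \<Rightarrow> 'a::finite \<Rightarrow> 's \<Rightarrow> real) \<Rightarrow> ('s \<Rightarrow> 'a) \<Rightarrow> 's set \<Rightarrow> 's \<Rightarrow> real" where
  "Pr_reach P \<sigma> T s = (SUP n. reach_within P \<sigma> T n s)"

definition Pr_max :: "('s::finite \<Rightarrow> 'a::finite \<Rightarrow> 's \<Rightarrow> real) \<Rightarrow> 's set \<Rightarrow> 's \<Rightarrow> real" where
  "Pr_max P T s = Max ((\<lambda>\<sigma>. Pr_reach P \<sigma> T s) ` {\<sigma>. is_strategy P \<sigma>})"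

definition B_max :: "('s::finite \<Rightarrow> 'a::finite \<Rightarrow> 's \<Rightarrow> real) \<Rightarrow> 's set \<Rightarrow> ('s \<Rightarrow> real) \<Rightarrow> 's \<Rightarrow> real" where
  "B_max P T x s = (if s \<in> T then 1
      else Max ((\<lambda>a. \<Sum>s'\<in>Post P s a. P s a s' * x s') ` Act P s))"

definition Act_incr :: "('s::finite \<Rightarrow> 'a::finite \<Rightarrow> 's \<Rightarrow> real) \<Rightarrow> ('s \<Rightarrow> real) \<Rightarrow> 's \<Rightarrow> 'a set" where
  "Act_incr P x s = {a \<in> Act P s. x s \<le> (\<Sum>s'\<in>Post P s a. P s a s' * x s')}"

text \<open>D^min_x on N_\<infinity> = enat (Inf {} = \<infinity>, 1 + \<infinity> = \<infinity>).\<close>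
definition D_min :: "('s::finite \<Rightarrow> 'a::finite \<Rightarrow> 's \<Rightarrow> real) \<Rightarrow> 's set \<Rightarrow> ('s \<Rightarrow> real) \<Rightarrow> ('s \<Rightarrow> enat) \<Rightarrow> 's \<Rightarrow> enat" where
  "D_min P T x r s = (if s \<in> T then 0
      else 1 + (INF a\<in>Act_incr P x s. INF s'\<in>Post P s a. r s'))"

end

theory Submission
  imports Defs
begin

text \<open>Fix a strategy \<sigma> that, in every state s \<notin> T with x s > 0, plays an x-increasing action
  having a successor of strictly smaller rank r; hypotheses (1) and (3) say exactly that such an
  action exists. The defect d = x - Pr_reach P \<sigma> T is then subharmonic for the induced Markov chain
  wherever it is positive. If its maximum m were positive, a maximiser of least rank would pass
  to a successor of smaller rank that, by averaging, is again a maximiser: contradiction.\<close>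

lemma is_mdp_nonneg: "is_mdp P \<Longrightarrow> 0 \<le> P s a t"
  unfolding is_mdp_def by blast

lemma sum_strategy_eq_1: "is_strategy P \<sigma> \<Longrightarrow> (\<Sum>t\<in>UNIV. P s (\<sigma> s) t) = 1"
  unfolding is_strategy_def Act_def by simp

lemma sum_Post_eq_sum_UNIV:
  assumes "is_mdp P"
  shows "(\<Sum>t\<in>Post P s a. P s a t * f t) = (\<Sum>t\<in>UNIV. P s a t * f t)"
proof (rule sum.mono_neutral_left)
  show "\<forall>t\<in>UNIV - Post P s a. P s a t * f t = 0"
    using is_mdp_nonneg[OF assms] by (auto simp: Post_def order.order_iff_strict)
qed auto

lemma strategy_exists:
  assumes "is_mdp P" and "\<And>s. Q s \<Longrightarrow> \<exists>a\<in>Act P s. R s a"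
  shows "\<exists>\<sigma>. is_strategy P \<sigma> \<and> (\<forall>s. Q s \<longrightarrow> R s (\<sigma> s))"
proof -
  have "\<exists>a. a \<in> Act P s \<and> (Q s \<longrightarrow> R s a)" for s
    using assms unfolding is_mdp_def Act_def by (cases "Q s") auto
  then have "\<forall>s. \<exists>a. a \<in> Act P s \<and> (Q s \<longrightarrow> R s a)" by blast
  then show ?thesis unfolding is_strategy_def by metis
qed

lemma reach_within_bounds:
  assumes "is_mdp P" and "is_strategy P \<sigma>"
  shows "0 \<le> reach_within P \<sigma> T n s \<and> reach_within P \<sigma> T n s \<le> 1"
proof (induction n arbitrary: s)
  case 0
  then show ?case by simp
next
  case (Suc n)
  have P_nonneg: "\<And>t. 0 \<le> P s (\<sigma> s) t" using is_mdp_nonneg[OF assms(1)] .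
  have "0 \<le> (\<Sum>t\<in>UNIV. P s (\<sigma> s) t * reach_within P \<sigma> T n t)"
    using P_nonneg Suc.IH by (intro sum_nonneg) auto
  moreover have "(\<Sum>t\<in>UNIV. P s (\<sigma> s) t * reach_within P \<sigma> T n t) \<le> (\<Sum>t\<in>UNIV. P s (\<sigma> s) t)"
    using P_nonneg Suc.IH by (intro sum_mono) (simp add: mult_left_le)
  ultimately show ?case
    using sum_strategy_eq_1[OF assms(2)] by simp
qed

lemma reach_within_Suc_mono:
  assumes "is_mdp P"
  shows "reach_within P \<sigma> T n s \<le> reach_within P \<sigma> T (Suc n) s"
proof (induction n arbitrary: s)
  case 0
  show ?case
    using is_mdp_nonneg[OF assms] by (simp add: sum_nonneg)
next
  case (Suc n)
  have "(\<Sum>t\<in>UNIV. P s (\<sigma> s) t * reach_within P \<sigma> T n t)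
      \<le> (\<Sum>t\<in>UNIV. P s (\<sigma> s) t * reach_within P \<sigma> T (Suc n) t)"
    using is_mdp_nonneg[OF assms] Suc.IH by (intro sum_mono mult_left_mono) auto
  then show ?case by (simp only: reach_within.simps) simp
qed

lemma reach_within_tendsto_Pr_reach:
  assumes "is_mdp P" and "is_strategy P \<sigma>"
  shows "(\<lambda>n. reach_within P \<sigma> T n s) \<longlonglongrightarrow> Pr_reach P \<sigma> T s"
  unfolding Pr_reach_def
proof (rule LIMSEQ_incseq_SUP)
  show "bdd_above (range (\<lambda>n. reach_within P \<sigma> T n s))"
    using reach_within_bounds[OF assms] by (auto intro!: bdd_aboveI)
  show "incseq (\<lambda>n. reach_within P \<sigma> T n s)"
    using reach_within_Suc_mono[OF assms(1)] by (intro incseq_SucI)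
qed

lemma Pr_reach_nonneg:
  assumes "is_mdp P" and "is_strategy P \<sigma>"
  shows "0 \<le> Pr_reach P \<sigma> T s"
  using reach_within_bounds[OF assms]
  by (intro LIMSEQ_le_const[OF reach_within_tendsto_Pr_reach[OF assms]]) auto

lemma Pr_reach_in_target: "s \<in> T \<Longrightarrow> Pr_reach P \<sigma> T s = 1"
proof -
  assume "s \<in> T"
  then have "reach_within P \<sigma> T n s = 1" for n by (cases n) auto
  then show ?thesis unfolding Pr_reach_def by simp
qed

lemma Pr_reach_unfold:
  assumes "is_mdp P" and "is_strategy P \<sigma>" and "s \<notin> T"
  shows "Pr_reach P \<sigma> T s = (\<Sum>t\<in>UNIV. P s (\<sigma> s) t * Pr_reach P \<sigma> T t)"
proof (rule LIMSEQ_unique)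
  show "(\<lambda>n. reach_within P \<sigma> T (Suc n) s) \<longlonglongrightarrow> Pr_reach P \<sigma> T s"
    using LIMSEQ_Suc[OF reach_within_tendsto_Pr_reach[OF assms(1,2)]] .
  show "(\<lambda>n. reach_within P \<sigma> T (Suc n) s) \<longlonglongrightarrow> (\<Sum>t\<in>UNIV. P s (\<sigma> s) t * Pr_reach P \<sigma> T t)"
    using \<open>s \<notin> T\<close> by (simp only: reach_within.simps if_False)
      (intro tendsto_sum tendsto_mult_left reach_within_tendsto_Pr_reach[OF assms(1,2)])
qed

lemma Pr_reach_le_Pr_max: "is_strategy P \<sigma> \<Longrightarrow> Pr_reach P \<sigma> T s \<le> Pr_max P T s"
  unfolding Pr_max_def by (intro Max_ge) auto

lemma D_min_le_finite_imp_descent: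
  assumes "D_min P T x r s \<le> r s" and "s \<notin> T" and "r s < \<infinity>"
  shows "\<exists>a\<in>Act_incr P x s. \<exists>t\<in>Post P s a. r t < r s"
proof -
  define m where "m = (INF a\<in>Act_incr P x s. INF t\<in>Post P s a. r t)"
  have "1 + m \<le> r s" using assms(1,2) unfolding D_min_def m_def by simp
  with \<open>r s < \<infinity>\<close> have "m < r s"
    by (cases m; cases "r s") (auto simp: one_enat_def)
  then show ?thesis unfolding m_def by (auto simp: INF_less_iff)
qed

lemma average_at_max_eq:
  fixes p d :: "'s::finite \<Rightarrow> real"
  assumes p_nonneg: "\<And>t. 0 \<le> p t" and p_sum: "(\<Sum>t\<in>UNIV. p t) = 1"
    and d_le: "\<And>t. d t \<le> m" and m_le: "m \<le> (\<Sum>t\<in>UNIV. p t * d t)"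
    and "0 < p t"
  shows "d t = m"
proof -
  have gap_nonneg: "\<And>t. 0 \<le> p t * (m - d t)"
    using p_nonneg d_le by simp
  have "(\<Sum>t\<in>UNIV. p t * (m - d t)) = m - (\<Sum>t\<in>UNIV. p t * d t)"
    by (simp add: right_diff_distrib sum_subtractf flip: sum_distrib_right, simp add: p_sum)
  moreover have "0 \<le> (\<Sum>t\<in>UNIV. p t * (m - d t))"
    using gap_nonneg by (rule sum_nonneg)
  ultimately have "(\<Sum>t\<in>UNIV. p t * (m - d t)) = 0"
    using m_le by linarith
  with gap_nonneg have "p t * (m - d t) = 0"
    by (simp add: sum_nonneg_eq_0_iff)
  with \<open>0 < p t\<close> show ?thesis by simp
qed

lemma ranked_subharmonic_nonpos:
  fixes p :: "'s::finite \<Rightarrow> 's \<Rightarrow> real" and d :: "'s \<Rightarrow> real" and rk :: "'s \<Rightarrow> 'b::order"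
  assumes p_nonneg: "\<And>s t. 0 \<le> p s t" and p_sum: "\<And>s. (\<Sum>t\<in>UNIV. p s t) = 1"
    and subharmonic: "\<And>s. 0 < d s \<Longrightarrow> d s \<le> (\<Sum>t\<in>UNIV. p s t * d t)"
    and descent: "\<And>s. 0 < d s \<Longrightarrow> \<exists>t. 0 < p s t \<and> rk t < rk s"
  shows "d s \<le> 0"
proof (rule ccontr)
  define m where "m = Max (range d)"
  have d_le: "\<And>t. d t \<le> m" unfolding m_def by simp
  assume "\<not> d s \<le> 0"
  then have m_pos: "0 < m" using d_le[of s] by simp
  have "m \<in> range d" unfolding m_def by (intro Max_in) auto
  then have "{s. d s = m} \<noteq> {}" by auto
  from ex_is_arg_min_if_finite[OF finite this, of rk]
  obtain s0 where "is_arg_min rk (\<lambda>s. s \<in> {s. d s = m}) s0" ..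
  then have s0_max: "d s0 = m" and s0_least: "\<And>s. d s = m \<Longrightarrow> \<not> rk s < rk s0"
    unfolding is_arg_min_def by auto
  obtain t where "0 < p s0 t" and "rk t < rk s0"
    using descent m_pos s0_max by blast
  have "m \<le> (\<Sum>t\<in>UNIV. p s0 t * d t)"
    using subharmonic m_pos s0_max by force
  then have "d t = m"
    by (rule average_at_max_eq[OF p_nonneg p_sum d_le _ \<open>0 < p s0 t\<close>])
  with s0_least \<open>rk t < rk s0\<close> show False by blast
qed

lemma descending_strategy_exists:
  assumes mdp: "is_mdp P"
    and D_min_le: "\<forall>s. D_min P T x r s \<le> r s"
    and r_finite: "\<forall>s. s \<notin> T \<longrightarrow> x s > 0 \<longrightarrow> r s < \<infinity>"
  obtains \<sigma> where "is_strategy P \<sigma>"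
    and "\<And>s. s \<notin> T \<Longrightarrow> 0 < x s \<Longrightarrow> \<sigma> s \<in> Act_incr P x s \<and> (\<exists>t\<in>Post P s (\<sigma> s). r t < r s)"
proof -
  have "\<exists>a\<in>Act P s. a \<in> Act_incr P x s \<and> (\<exists>t\<in>Post P s a. r t < r s)"
    if "s \<notin> T \<and> 0 < x s" for s
    using D_min_le_finite_imp_descent[of P T x r s] D_min_le r_finite that
    unfolding Act_incr_def by blast
  with strategy_exists[OF mdp, where Q = "\<lambda>s. s \<notin> T \<and> 0 < x s"
      and R = "\<lambda>s a. a \<in> Act_incr P x s \<and> (\<exists>t\<in>Post P s a. r t < r s)"]
  show ?thesis using that by blast
qed

lemma le_Pr_reach_if_descending_strategy:
  fixes rk :: "'s::finite \<Rightarrow> 'b::order"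
  assumes mdp: "is_mdp P" and \<sigma>: "is_strategy P \<sigma>"
    and x_le_1: "\<And>s. s \<in> T \<Longrightarrow> x s \<le> 1"
    and \<sigma>_descent:
      "\<And>s. s \<notin> T \<Longrightarrow> 0 < x s \<Longrightarrow> \<sigma> s \<in> Act_incr P x s \<and> (\<exists>t\<in>Post P s (\<sigma> s). rk t < rk s)"
  shows "x s \<le> Pr_reach P \<sigma> T s"
proof -
  define d where "d s = x s - Pr_reach P \<sigma> T s" for s
  have d_pos_imp: "s \<notin> T" "0 < x s" if "0 < d s" for s
  proof -
    show "s \<notin> T"
    proof
      assume "s \<in> T"
      then have "d s \<le> 0" using x_le_1 by (simp add: d_def Pr_reach_in_target)
      with that show False by simp
    qed
    show "0 < x s" using that Pr_reach_nonneg[OF mdp \<sigma>, of T s] unfolding d_def by simp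
  qed
  have "d s \<le> 0"
  proof (rule ranked_subharmonic_nonpos[where p = "\<lambda>s. P s (\<sigma> s)" and rk = rk])
    fix s assume "0 < d s"
    note s = d_pos_imp[OF this]
    then have "x s \<le> (\<Sum>t\<in>UNIV. P s (\<sigma> s) t * x t)"
      using \<sigma>_descent sum_Post_eq_sum_UNIV[OF mdp] unfolding Act_incr_def by auto
    then show "d s \<le> (\<Sum>t\<in>UNIV. P s (\<sigma> s) t * d t)"
      using Pr_reach_unfold[OF mdp \<sigma> \<open>s \<notin> T\<close>]
      by (simp add: d_def right_diff_distrib sum_subtractf)
    show "\<exists>t. 0 < P s (\<sigma> s) t \<and> rk t < rk s"
      using \<sigma>_descent[OF s] unfolding Post_def by auto
  qed (use is_mdp_nonneg[OF mdp] sum_strategy_eq_1[OF \<sigma>] in auto)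
  then show ?thesis unfolding d_def by simp
qed

theorem proposition6:
  fixes P :: "'s::finite \<Rightarrow> 'a::finite \<Rightarrow> 's \<Rightarrow> real"
    and T :: "'s set" and x :: "'s \<Rightarrow> real" and r :: "'s \<Rightarrow> enat"
  assumes mdp: "is_mdp P"
    and x_range: "\<forall>s. 0 \<le> x s \<and> x s \<le> 1"
    and h1: "\<forall>s. D_min P T x r s \<le> r s"
    and h2: "\<forall>s. x s \<le> B_max P T x s"
    and h3: "\<forall>s. s \<notin> T \<longrightarrow> x s > 0 \<longrightarrow> r s < \<infinity>"
  shows "\<forall>s. Pr_max P T s \<ge> x s"
proof
  fix s
  obtain \<sigma> where \<sigma>: "is_strategy P \<sigma>"
    and \<sigma>_descent: "\<And>s. s \<notin> T \<Longrightarrow> 0 < x s \<Longrightarrow> \<sigma> s \<in> Act_incr P x s \<and> (\<exists>t\<in>Post P s (\<sigma> s). r t < r s)"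
    using descending_strategy_exists[OF mdp h1 h3] by blast
  have "x s \<le> Pr_reach P \<sigma> T s"
    using le_Pr_reach_if_descending_strategy[OF mdp \<sigma> _ \<sigma>_descent] x_range by blast
  also have "\<dots> \<le> Pr_max P T s"
    using \<sigma> by (rule Pr_reach_le_Pr_max)
  finally show "Pr_max P T s \<ge> x s" .
qed

end
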